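(* Fix $T\ge1$ and an episode $k$ of Variation-aware UCRL with confidence parameter $\delta$, started at $t_k\le T$. Let $\tilde\rho=\max_{M'\in\mathcal M_k}\rho^*(M')$ be the optimistic average reward computed from the data before $t_k$ with variation parameters $\tilde V^r=V^r_T$, $\tilde V^p=V^p_T$, and let $\tilde\rho^0=\max_{M'\in\mathcal M^0_k}\rho^*(M')$ be the optimistic average reward computed from the same data with variation parameters $\tilde V^r=\tilde V^p=0$. Assume that $\mathcal M_k$ contains all MDPs $M_\tau$, $\tau=1,\dots,T$. Then \[\tilde\rho\le\tilde\rho^0+V^r_T+D\,V^p_T.\]
   Context: Let $\mathcal S$ be a finite set of $S$ states and $\mathcal A$ a finite set of $A$ actions. A (time-homogeneous) MDP has mean rewards $\bar r(s,a)\in[0,1]$ and transition probabilities $p(\cdot\mid s,a)$; it is communicating if every state can be reached from every other with positive probability by suitable actions; its diameter is $\max_{s\ne s'}\min_\pi\mathbb E[T(s'\mid s,\pi)]$ with $T(s'\mid s,\pi)$ the first time $s'$ is reached from $s$ under stationary policy $\pi$. $\rho(M,\pi)=\lim_n\frac1n\mathbb E[\sum_{t=1}^nr_t]$, $\rho^*(M)=\max_\pi\rho(M,\pi)$. Changing environment: for every step $t$ there is an MDP $M_t=(\mathcal S,\mathcal A,\bar r_t,p_t,s_1)$ (fixed in advance); at step $t$ in state $s_t$ the learner chooses $a_t$, receives a reward $r_t\in[0,1]$ with mean $\bar r_t(s_t,a_t)$, and moves to $s_{t+1}\sim p_t(\cdot\mid s_t,a_t)$. Every $M_t$ is communicating with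 diameter at most $D$. Variations: $V^r_T=\sum_{t=1}^{T-1}\max_{s,a}|\bar r_{t+1}(s,a)-\bar r_t(s,a)|$, $V^p_T=\sum_{t=1}^{T-1}\max_{s,a}\|p_{t+1}(\cdot\mid s,a)-p_t(\cdot\mid s,a)\|_1$. In Variation-aware UCRL, episode $k$ starts at step $t_k$; $N_k(s,a)$ is the number of steps $\tau<t_k$ with $(s_\tau,a_\tau)=(s,a)$; $\hat r_k(s,a)=\sum_{\tau<t_k}r_\tau\mathbb 1\{s_\tau=s,a_\tau=a\}/\max(1,N_k(s,a))$, $\hat p_k(s'\mid s,a)=\#\{\tau<t_k:s_\tau=s,a_\tau=a,s_{\tau+1}=s'\}/\max(1,N_k(s,a))$. For variation parameters $\tilde V^r,\tilde V^p\ge0$, the plausible set consists of all MDPs with rewards $\tilde r$, transitions $\tilde p$ satisfying for all $(s,a)$: $|\tilde r(s,a)-\hat r_k(s,a)|\le\tilde V^r+\sqrt{8\log(8SAt_k^3/\delta)/\max(1,N_k(s,a))}$ and $\|\tilde p(\cdot\mid s,a)-\hat p_k(\cdot\mid s,a)\|_1\le\tilde V^p+\sqrt{8S\log(8SAt_k^3/\delta)/\max(1,N_k(s,a))}$; $\mathcal M_k$ is this set for $(\tilde V^r,\tilde V^p)=(V^r_T,V^p_T)$ and $\mathcal M^0_k$ for $(0,0)$. *)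

theory Defs
  imports Complex_Main "HOL-Library.Extended_Nonnegative_Real"
begin

text \<open>An MDP on finite state type 's and action type 'a is given by mean rewards
  r :: 's => 'a => real and transition probabilities p :: 's => 'a => 's => real
  (p s a s' = probability of moving to s' after action a in state s).\<close>

definition is_mdp :: "('s::finite \<Rightarrow> 'a::finite \<Rightarrow> real) \<Rightarrow> ('s \<Rightarrow> 'a \<Rightarrow> 's \<Rightarrow> real) \<Rightarrow> bool" where
  "is_mdp r p \<longleftrightarrow> (\<forall>s a. 0 \<le> r s a \<and> r s a \<le> 1)
     \<and> (\<forall>s a s'. 0 \<le> p s a s') \<and> (\<forall>s a. (\<Sum>s'\<in>UNIV. p s a s') = 1)"

fun state_dist :: "('s::finite \<Rightarrow> 'a \<Rightarrow> 's \<Rightarrow> real) \<Rightarrow> ('s \<Rightarrow> 'a) \<Rightarrow> 's \<Rightarrow> nat \<Rightarrow> 's \<Rightarrow> real" where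
  "state_dist p pol s 0 = (\<lambda>y. if y = s then 1 else 0)"
| "state_dist p pol s (Suc n) = (\<lambda>y. \<Sum>x\<in>UNIV. state_dist p pol s n x * p x (pol x) y)"

definition avg_reward :: "('s::finite \<Rightarrow> 'a \<Rightarrow> real) \<Rightarrow> ('s \<Rightarrow> 'a \<Rightarrow> 's \<Rightarrow> real) \<Rightarrow> 's \<Rightarrow> ('s \<Rightarrow> 'a) \<Rightarrow> real" where
  "avg_reward r p s1 pol =
     lim (\<lambda>n. (\<Sum>i<n. \<Sum>x\<in>UNIV. state_dist p pol s1 i x * r x (pol x)) / real n)"

definition opt_avg_reward :: "('s::finite \<Rightarrow> 'a::finite \<Rightarrow> real) \<Rightarrow> ('s \<Rightarrow> 'a \<Rightarrow> 's \<Rightarrow> real) \<Rightarrow> 's \<Rightarrow> real" where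
  "opt_avg_reward r p s1 = Max (range (avg_reward r p s1))"

text \<open>Probability of not having reached s' within the first n steps, starting in x.\<close>

fun not_hit :: "('s::finite \<Rightarrow> 'a \<Rightarrow> 's \<Rightarrow> real) \<Rightarrow> ('s \<Rightarrow> 'a) \<Rightarrow> 's \<Rightarrow> nat \<Rightarrow> 's \<Rightarrow> real" where
  "not_hit p pol s' 0 = (\<lambda>x. 1)"
| "not_hit p pol s' (Suc n) = (\<lambda>x. \<Sum>y\<in>UNIV - {s'}. p x (pol x) y * not_hit p pol s' n y)"

text \<open>E[T(s'|s,pol)] = sum_n P(T > n), for s \<noteq> s' (possibly infinite).\<close>

definition exp_hit_time :: "('s::finite \<Rightarrow> 'a \<Rightarrow> 's \<Rightarrow> real) \<Rightarrow> ('s \<Rightarrow> 'a) \<Rightarrow> 's \<Rightarrow> 's \<Rightarrow> ennreal" where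
  "exp_hit_time p pol s s' = (\<Sum>n. ennreal (not_hit p pol s' n s))"

definition diameter :: "('s::finite \<Rightarrow> 'a \<Rightarrow> 's \<Rightarrow> real) \<Rightarrow> ennreal" where
  "diameter p = (SUP ss \<in> {(s, s'). s \<noteq> s'}. INF pol. exp_hit_time p pol (fst ss) (snd ss))"

definition communicating :: "('s::finite \<Rightarrow> 'a \<Rightarrow> 's \<Rightarrow> real) \<Rightarrow> bool" where
  "communicating p \<longleftrightarrow> (\<forall>s s'. \<exists>pol n. state_dist p pol s n s' > 0)"

definition var_r :: "(nat \<Rightarrow> 's::finite \<Rightarrow> 'a::finite \<Rightarrow> real) \<Rightarrow> nat \<Rightarrow> real" where
  "var_r rb T = (\<Sum>t\<in>{1..<T}. Max (range (\<lambda>(s, a). \<bar>rb (Suc t) s a - rb t s a\<bar>)))"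

definition var_p :: "(nat \<Rightarrow> 's::finite \<Rightarrow> 'a::finite \<Rightarrow> 's \<Rightarrow> real) \<Rightarrow> nat \<Rightarrow> real" where
  "var_p pb T = (\<Sum>t\<in>{1..<T}.
      Max (range (\<lambda>(s, a). \<Sum>s'\<in>UNIV. \<bar>pb (Suc t) s a s' - pb t s a s'\<bar>)))"

text \<open>Empirical quantities from the history (states st, actions ac, rewards rw,
  steps 1,2,...) before step tk.\<close>

definition visits :: "(nat \<Rightarrow> 's) \<Rightarrow> (nat \<Rightarrow> 'a) \<Rightarrow> nat \<Rightarrow> 's \<Rightarrow> 'a \<Rightarrow> nat set" where
  "visits st ac tk s a = {\<tau>. 1 \<le> \<tau> \<and> \<tau> < tk \<and> st \<tau> = s \<and> ac \<tau> = a}"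

definition N_count :: "(nat \<Rightarrow> 's) \<Rightarrow> (nat \<Rightarrow> 'a) \<Rightarrow> nat \<Rightarrow> 's \<Rightarrow> 'a \<Rightarrow> nat" where
  "N_count st ac tk s a = card (visits st ac tk s a)"

definition r_hat :: "(nat \<Rightarrow> 's) \<Rightarrow> (nat \<Rightarrow> 'a) \<Rightarrow> (nat \<Rightarrow> real) \<Rightarrow> nat \<Rightarrow> 's \<Rightarrow> 'a \<Rightarrow> real" where
  "r_hat st ac rw tk s a =
     (\<Sum>\<tau>\<in>visits st ac tk s a. rw \<tau>) / real (max 1 (N_count st ac tk s a))"

definition p_hat :: "(nat \<Rightarrow> 's) \<Rightarrow> (nat \<Rightarrow> 'a) \<Rightarrow> nat \<Rightarrow> 's \<Rightarrow> 'a \<Rightarrow> 's \<Rightarrow> real" where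
  "p_hat st ac tk s a s' =
     real (card {\<tau> \<in> visits st ac tk s a. st (Suc \<tau>) = s'}) / real (max 1 (N_count st ac tk s a))"

definition plausible_set ::
  "real \<Rightarrow> real \<Rightarrow> real \<Rightarrow> (nat \<Rightarrow> 's::finite) \<Rightarrow> (nat \<Rightarrow> 'a::finite) \<Rightarrow> (nat \<Rightarrow> real) \<Rightarrow> nat
   \<Rightarrow> (('s \<Rightarrow> 'a \<Rightarrow> real) \<times> ('s \<Rightarrow> 'a \<Rightarrow> 's \<Rightarrow> real)) set" where
  "plausible_set Vr Vp \<delta> st ac rw tk = {(r', p'). is_mdp r' p' \<and>
     (\<forall>s a.
        \<bar>r' s a - r_hat st ac rw tk s a\<bar> \<le> Vr +
          sqrt (8 * ln (8 * real (card (UNIV :: 's set)) * real (card (UNIV :: 'a set)) * real tk ^ 3 / \<delta>)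
                / real (max 1 (N_count st ac tk s a)))
      \<and> (\<Sum>s'\<in>UNIV. \<bar>p' s a s' - p_hat st ac tk s a s'\<bar>) \<le> Vp +
          sqrt (8 * real (card (UNIV :: 's set)) * ln (8 * real (card (UNIV :: 's set)) * real (card (UNIV :: 'a set)) * real tk ^ 3 / \<delta>)
                / real (max 1 (N_count st ac tk s a))))}"

definition optimistic_rho :: "(('s::finite \<Rightarrow> 'a::finite \<Rightarrow> real) \<times> ('s \<Rightarrow> 'a \<Rightarrow> 's \<Rightarrow> real)) set \<Rightarrow> 's \<Rightarrow> real" where
  "optimistic_rho Ms s1 = Sup ((\<lambda>(r', p'). opt_avg_reward r' p' s1) ` Ms)"

end

theory Submission
  imports Defs "HOL-Analysis.Analysis"
begin

text \<open>Fix a discount factor \<open>\<beta> < 1\<close> and let \<open>V\<close> be the fixed point of the optimistic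
  discounted Bellman operator of \<open>M_k\<close>. As the true MDP \<open>M_1\<close> lies in \<open>M_k\<close>, every step of a
  policy of \<open>M_1\<close> decreases \<open>V\<close> by at most one unit in expectation; following a policy that
  reaches a maximiser of \<open>V\<close> within \<open>D\<close> expected steps thus bounds the span of \<open>V\<close> by \<open>D\<close>.
  Now \<open>(1 - \<beta>) V\<close> nearly solves the average-reward optimality inequalities: every MDP of
  \<open>M_k\<close> earns at most \<open>(1 - \<beta>) max V\<close> under any policy, while the greedy choices of \<open>V\<close>,
  each moved into \<open>M_k\<^sup>0\<close> (the reward by at most \<open>V\<^sup>r_T\<close>, the transition row by at most
  \<open>V\<^sup>p_T\<close> in \<open>L\<^sub>1\<close>, which changes its expectation of \<open>V\<close> by at most
  \<open>V\<^sup>p_T span V \<le> D V\<^sup>p_T\<close>), form an MDP of \<open>M_k\<^sup>0\<close> earning at least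
  \<open>(1 - \<beta>) min V - V\<^sup>r_T - D V\<^sup>p_T - (1 - \<beta>)\<close>. Let \<open>\<beta> \<rightarrow> 1\<close>.

  Since \<open>avg_reward\<close> is defined by \<open>lim\<close>, bounding it needs the Cesaro averages of the powers
  of a stochastic matrix to converge; they do, because any two of their limit points \<open>L\<^sub>1\<close>,
  \<open>L\<^sub>2\<close> are invariant under the matrix, whence \<open>L\<^sub>1 = L\<^sub>1 L\<^sub>2 = L\<^sub>2\<close>.\<close>

hide_const (open) Elementary_Metric_Spaces.diameter

section \<open>Limits\<close>

lemma convergent_if_unique_subseq_limit:
  fixes X :: "nat \<Rightarrow> 'a::heine_borel"
  assumes bounded: "bounded (range X)"
    and unique: "\<And>r1 r2 l1 l2. strict_mono r1 \<Longrightarrow> strict_mono r2 \<Longrightarrow>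
      (X \<circ> r1) \<longlonglongrightarrow> l1 \<Longrightarrow> (X \<circ> r2) \<longlonglongrightarrow> l2 \<Longrightarrow> l1 = l2"
  shows "convergent X"
proof -
  obtain l r where r: "strict_mono r" "(X \<circ> r) \<longlonglongrightarrow> l"
    using bounded_imp_convergent_subsequence[OF bounded] by blast
  have "X \<longlonglongrightarrow> l"
  proof (rule ccontr)
    assume "\<not> X \<longlonglongrightarrow> l"
    then obtain e where e: "e > 0" "\<not> eventually (\<lambda>n. dist (X n) l < e) sequentially"
      unfolding tendsto_iff by blast
    then obtain r2 :: "nat \<Rightarrow> nat" where r2: "strict_mono r2" "\<And>n. e \<le> dist (X (r2 n)) l"
      using not_eventually_sequentiallyD[OF e(2)] by (auto simp: not_less)
    have "bounded (range (X \<circ> r2))"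
      using bounded by (rule bounded_subset) auto
    then obtain l' r3 where r3: "strict_mono r3" "((X \<circ> r2) \<circ> r3) \<longlonglongrightarrow> l'"
      using bounded_imp_convergent_subsequence by blast
    have "l' = l"
      using unique[OF strict_mono_o[OF r2(1) r3(1)] r(1) _ r(2)] r3(2) by (simp add: o_assoc)
    moreover have "e \<le> dist l' l"
      by (rule tendsto_le[OF _ tendsto_dist[OF r3(2) tendsto_const] tendsto_const])
        (use r2(2) in simp_all)
    ultimately show False
      using e(1) by simp
  qed
  then show ?thesis
    by (auto simp: convergent_def)
qed

lemma convergent_if_unique_pointwise_subseq_limit:
  fixes F :: "nat \<Rightarrow> 'i::finite \<Rightarrow> real"
  assumes bounded: "\<And>n i. \<bar>F n i\<bar> \<le> B"
    and unique: "\<And>r1 r2 L1 L2. strict_mono r1 \<Longrightarrow> strict_mono r2 \<Longrightarrow>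
      (\<And>i. (\<lambda>k. F (r1 k) i) \<longlonglongrightarrow> L1 i) \<Longrightarrow> (\<And>i. (\<lambda>k. F (r2 k) i) \<longlonglongrightarrow> L2 i) \<Longrightarrow>
      L1 = L2"
  shows "convergent (\<lambda>n. F n i)"
proof -
  define X :: "nat \<Rightarrow> real ^ 'i" where "X n = (\<chi> i. F n i)" for n
  have "norm (X n) \<le> real CARD('i) * B" for n
  proof -
    have "norm (X n) \<le> (\<Sum>i\<in>UNIV. \<bar>X n $ i\<bar>)"
      by (rule norm_le_l1_cart)
    also have "\<dots> \<le> (\<Sum>i\<in>(UNIV :: 'i set). B)"
      using bounded by (intro sum_mono) (simp add: X_def)
    finally show ?thesis
      by simp
  qed
  then have "bounded (range X)"
    unfolding bounded_iff by blast
  moreover have "l1 = l2"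
    if "strict_mono r1" "strict_mono r2" "(X \<circ> r1) \<longlonglongrightarrow> l1" "(X \<circ> r2) \<longlonglongrightarrow> l2" for r1 r2 l1 l2
  proof -
    have components: "(\<lambda>k. F (r k) i) \<longlonglongrightarrow> l $ i" if "(X \<circ> r) \<longlonglongrightarrow> l" for r l i
      using tendsto_vec_nth[OF that, of i] by (simp add: X_def o_def)
    have "(\<lambda>i. l1 $ i) = (\<lambda>i. l2 $ i)"
      using unique[OF that(1,2) components[OF that(3)] components[OF that(4)]] .
    then show ?thesis
      by (simp add: vec_eq_iff fun_eq_iff)
  qed
  ultimately have "convergent X"
    by (rule convergent_if_unique_subseq_limit)
  then obtain l where "X \<longlonglongrightarrow> l"
    by (auto simp: convergent_def)
  from tendsto_vec_nth[OF this, of i] show ?thesis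
    by (auto simp: X_def convergent_def)
qed

lemma LIMSEQ_le_of_le_plus_inverse:
  fixes X :: "nat \<Rightarrow> real"
  assumes "X \<longlonglongrightarrow> L" and "\<And>n. 1 \<le> n \<Longrightarrow> X n \<le> G + c / real n"
  shows "L \<le> G"
proof (rule tendsto_le[OF _ _ assms(1)])
  show "(\<lambda>n. G + c * (1 / real n)) \<longlonglongrightarrow> G"
    using tendsto_add[OF tendsto_const tendsto_mult[OF tendsto_const lim_inverse_n'], of G c] by simp
  show "\<forall>\<^sub>F n in sequentially. X n \<le> G + c * (1 / real n)"
    using eventually_ge_at_top[of 1] by eventually_elim (simp add: assms(2))
qed simp

lemma le_of_forall_discount_le:
  fixes X R c :: real
  assumes "\<And>\<beta>. 0 \<le> \<beta> \<Longrightarrow> \<beta> < 1 \<Longrightarrow> X \<le> R + (1 - \<beta>) * c"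
  shows "X \<le> R"
proof (rule tendsto_le[OF trivial_limit_at_left_real])
  show "((\<lambda>\<beta>. R + (1 - \<beta>) * c) \<longlongrightarrow> R) (at_left 1)"
    by (intro tendsto_eq_intros) auto
  show "((\<lambda>_. X) \<longlongrightarrow> X) (at_left 1)"
    by simp
  have "\<forall>\<^sub>F \<beta> in at_left 1. \<beta> \<in> {0<..<(1::real)}"
    by (rule eventually_at_left_real) simp
  then show "\<forall>\<^sub>F \<beta> in at_left 1. X \<le> R + (1 - \<beta>) * c"
    by eventually_elim (simp add: assms)
qed

section \<open>Distributions on a finite type\<close>

abbreviation expect :: "('s::finite \<Rightarrow> real) \<Rightarrow> ('s \<Rightarrow> real) \<Rightarrow> real" where
  "expect q h \<equiv> \<Sum>y\<in>UNIV. q y * h y"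

definition is_distribution :: "('s::finite \<Rightarrow> real) \<Rightarrow> bool" where
  "is_distribution q \<longleftrightarrow> (\<forall>y. 0 \<le> q y) \<and> sum q UNIV = 1"

definition value_span :: "('s::finite \<Rightarrow> real) \<Rightarrow> real" where
  "value_span h = Max (range h) - Min (range h)"

lemma value_span_nonneg: "0 \<le> value_span h"
proof -
  have "Min (range h) \<le> h undefined" "h undefined \<le> Max (range h)"
    by simp_all
  then show ?thesis
    by (simp add: value_span_def)
qed

lemma is_distribution_le_1:
  assumes "is_distribution q"
  shows "q y \<le> 1"
proof -
  have "q y \<le> sum q UNIV"
    by (rule member_le_sum) (use assms in \<open>auto simp: is_distribution_def\<close>)
  then show ?thesis
    using assms by (simp add: is_distribution_def)
qed

lemma expect_le_Max:
  assumes "is_distribution q"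
  shows "expect q h \<le> Max (range h)"
proof -
  have "expect q h \<le> (\<Sum>y\<in>UNIV. q y * Max (range h))"
    using assms by (intro sum_mono mult_left_mono) (auto simp: is_distribution_def)
  then show ?thesis
    using assms by (simp add: is_distribution_def flip: sum_distrib_right)
qed

lemma Min_le_expect:
  assumes "is_distribution q"
  shows "Min (range h) \<le> expect q h"
proof -
  have "(\<Sum>y\<in>UNIV. q y * Min (range h)) \<le> expect q h"
    using assms by (intro sum_mono mult_left_mono) (auto simp: is_distribution_def)
  then show ?thesis
    using assms by (simp add: is_distribution_def flip: sum_distrib_right)
qed

lemma expect_const [simp]: "is_distribution q \<Longrightarrow> expect q (\<lambda>_. c) = c"
  by (simp add: is_distribution_def flip: sum_distrib_right)

lemma expect_mono:
  "is_distribution q \<Longrightarrow> (\<And>y. h y \<le> g y) \<Longrightarrow> expect q h \<le> expect q g"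
  unfolding is_distribution_def by (intro sum_mono mult_left_mono) auto

lemma expect_le_sum_abs:
  assumes "is_distribution q"
  shows "expect q V \<le> (\<Sum>y\<in>UNIV. \<bar>V y\<bar>)"
proof (rule sum_mono)
  fix y
  have q: "0 \<le> q y" "q y \<le> 1"
    using assms is_distribution_le_1 by (auto simp: is_distribution_def)
  then have "q y * V y \<le> q y * \<bar>V y\<bar>"
    by (intro mult_left_mono) auto
  also have "\<dots> \<le> \<bar>V y\<bar>"
    using q by (simp add: mult_left_le_one_le)
  finally show "q y * V y \<le> \<bar>V y\<bar>" .
qed

lemma expect_diff_le_l1_span:
  fixes u v h :: "'s::finite \<Rightarrow> real"
  assumes "sum u UNIV = 1" "sum v UNIV = 1"
  shows "expect u h - expect v h \<le> (\<Sum>y\<in>UNIV. \<bar>u y - v y\<bar>) * value_span h"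
proof -
  define m where "m = Min (range h)"
  have h: "m \<le> h y" "h y - m \<le> value_span h" for y
    unfolding m_def value_span_def by (simp_all add: Max_ge)
  have "expect u h - expect v h = (\<Sum>y\<in>UNIV. (u y - v y) * (h y - m)) + m * (sum u UNIV - sum v UNIV)"
    by (simp add: algebra_simps sum_subtractf sum.distrib sum_distrib_left sum_distrib_right)
  also have "\<dots> = (\<Sum>y\<in>UNIV. (u y - v y) * (h y - m))"
    using assms by simp
  also have "\<dots> \<le> (\<Sum>y\<in>UNIV. \<bar>u y - v y\<bar> * value_span h)"
  proof (rule sum_mono)
    fix y
    have "(u y - v y) * (h y - m) \<le> \<bar>u y - v y\<bar> * (h y - m)"
      using h(1)[of y] by (intro mult_right_mono) auto
    also have "\<dots> \<le> \<bar>u y - v y\<bar> * value_span h"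
      using h(2)[of y] by (intro mult_left_mono) auto
    finally show "(u y - v y) * (h y - m) \<le> \<bar>u y - v y\<bar> * value_span h" .
  qed
  finally show ?thesis
    by (simp add: sum_distrib_right)
qed

lemma clip_to_ball:
  fixes x m c v :: real
  assumes "0 \<le> m" "m \<le> 1" "0 \<le> x" "x \<le> 1" "0 \<le> c" "0 \<le> v" "\<bar>x - m\<bar> \<le> v + c"
  obtains x0 where "0 \<le> x0" "x0 \<le> 1" "\<bar>x0 - m\<bar> \<le> c" "x - v \<le> x0"
proof
  let ?x0 = "max (m - c) (min (m + c) x)"
  show "0 \<le> ?x0" "?x0 \<le> 1" "\<bar>?x0 - m\<bar> \<le> c" "x - v \<le> ?x0"
    using assms by (auto simp: abs_if max_def min_def split: if_splits)
qed

text \<open>Mixing \<open>q\<close> with the centre \<open>m\<close> moves it onto the sphere of radius \<open>c\<close>, at a cost in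
  expectation proportional to the distance travelled.\<close>

lemma shrink_to_l1_ball:
  assumes q: "is_distribution q" and m: "is_distribution m"
    and c: "0 \<le> c" "c < (\<Sum>y\<in>UNIV. \<bar>q y - m y\<bar>)"
  obtains q0 where "is_distribution q0" "(\<Sum>y\<in>UNIV. \<bar>q0 y - m y\<bar>) = c"
    "expect q h - ((\<Sum>y\<in>UNIV. \<bar>q y - m y\<bar>) - c) * value_span h \<le> expect q0 h"
proof
  define d where "d = (\<Sum>y\<in>UNIV. \<bar>q y - m y\<bar>)"
  define l where "l = c / d"
  have l: "0 \<le> l" "l \<le> 1" "l * d = c"
    using c by (auto simp: l_def d_def)
  let ?q0 = "\<lambda>y. l * q y + (1 - l) * m y"
  show "is_distribution ?q0"
    using q m l by (auto simp: is_distribution_def sum.distrib simp flip: sum_distrib_left)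
  have "?q0 y - m y = l * (q y - m y)" for y
    by (simp add: algebra_simps)
  then show "(\<Sum>y\<in>UNIV. \<bar>?q0 y - m y\<bar>) = c"
    using l by (simp add: abs_mult d_def flip: sum_distrib_left)
  have "expect q h - expect ?q0 h = (1 - l) * (expect q h - expect m h)"
    by (simp add: algebra_simps sum.distrib sum_subtractf sum_distrib_left)
  also have "\<dots> \<le> (1 - l) * (d * value_span h)"
    using l q m unfolding d_def is_distribution_def
    by (intro mult_left_mono expect_diff_le_l1_span) auto
  also have "\<dots> = (d - c) * value_span h"
    using l by (simp add: algebra_simps)
  finally show "expect q h - ((\<Sum>y\<in>UNIV. \<bar>q y - m y\<bar>) - c) * value_span h \<le> expect ?q0 h"
    by (simp add: d_def)
qed

section \<open>Cesaro averages of stochastic kernels\<close>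

definition kernel_comp ::
  "('a \<Rightarrow> 'b::finite \<Rightarrow> real) \<Rightarrow> ('b \<Rightarrow> 'c \<Rightarrow> real) \<Rightarrow> 'a \<Rightarrow> 'c \<Rightarrow> real" where
  "kernel_comp X Y s y = (\<Sum>z\<in>UNIV. X s z * Y z y)"

definition kernel_id :: "'s \<Rightarrow> 's \<Rightarrow> real" where
  "kernel_id s y = (if y = s then 1 else 0)"

fun kernel_pow :: "('s::finite \<Rightarrow> 's \<Rightarrow> real) \<Rightarrow> nat \<Rightarrow> 's \<Rightarrow> 's \<Rightarrow> real" where
  "kernel_pow P 0 = kernel_id"
| "kernel_pow P (Suc n) = kernel_comp (kernel_pow P n) P"

definition cesaro_kernel :: "('s::finite \<Rightarrow> 's \<Rightarrow> real) \<Rightarrow> nat \<Rightarrow> 's \<Rightarrow> 's \<Rightarrow> real" where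
  "cesaro_kernel P n s y = (\<Sum>i<n. kernel_pow P i s y) / real n"

lemma kernel_comp_assoc: "kernel_comp (kernel_comp X Y) Z = kernel_comp X (kernel_comp Y Z)"
  by (auto simp: kernel_comp_def fun_eq_iff sum_distrib_left sum_distrib_right mult.assoc
      intro: sum.swap)

lemma kernel_comp_id_right [simp]: "kernel_comp X kernel_id = X"
  by (simp add: kernel_comp_def kernel_id_def fun_eq_iff if_distrib cong: if_cong)

lemma kernel_comp_id_left [simp]: "kernel_comp kernel_id X = X"
  by (simp add: kernel_comp_def kernel_id_def fun_eq_iff if_distrib[of "\<lambda>u. u * _"] cong: if_cong)

lemma kernel_pow_Suc_left: "kernel_pow P (Suc n) = kernel_comp P (kernel_pow P n)"
proof (induction n)
  case (Suc n)
  have "kernel_pow P (Suc (Suc n)) = kernel_comp (kernel_comp P (kernel_pow P n)) P"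
    using Suc by simp
  also have "\<dots> = kernel_comp P (kernel_pow P (Suc n))"
    by (simp add: kernel_comp_assoc)
  finally show ?case .
qed simp

lemma kernel_pow_sum_telescope:
  "(\<Sum>i<n. kernel_pow P (Suc i) s y) = (\<Sum>i<n. kernel_pow P i s y) + (kernel_pow P n s y - kernel_id s y)"
  by (induction n) auto

lemma cesaro_kernel_comp_right:
  "kernel_comp (cesaro_kernel P n) P s y = cesaro_kernel P n s y + (kernel_pow P n s y - kernel_id s y) / real n"
proof -
  have "kernel_comp (cesaro_kernel P n) P s y = (\<Sum>i<n. kernel_pow P (Suc i) s y) / real n"
    by (simp add: cesaro_kernel_def kernel_comp_def sum_divide_distrib sum_distrib_right)
      (rule sum.swap)
  then show ?thesis
    unfolding kernel_pow_sum_telescope by (simp add: cesaro_kernel_def add_divide_distrib)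
qed

lemma cesaro_kernel_comp_left:
  "kernel_comp P (cesaro_kernel P n) s y = cesaro_kernel P n s y + (kernel_pow P n s y - kernel_id s y) / real n"
proof -
  have "kernel_comp P (cesaro_kernel P n) s y = (\<Sum>i<n. kernel_pow P (Suc i) s y) / real n"
    by (simp add: cesaro_kernel_def kernel_comp_def kernel_pow_Suc_left sum_divide_distrib
        sum_distrib_left del: kernel_pow.simps) (rule sum.swap)
  then show ?thesis
    unfolding kernel_pow_sum_telescope by (simp add: cesaro_kernel_def add_divide_distrib)
qed

lemma kernel_pow_expect_telescope:
  "(\<Sum>i<n. expect (kernel_pow P i s) f)
   = (\<Sum>i<n. expect (kernel_pow P i s) (\<lambda>x. f x + expect (P x) h - h x))
     + expect (kernel_pow P 0 s) h - expect (kernel_pow P n s) h"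
proof -
  have step: "expect (kernel_pow P i s) (\<lambda>x. expect (P x) h) = expect (kernel_pow P (Suc i) s) h" for i
    by (simp add: kernel_comp_def sum_distrib_left sum_distrib_right mult.assoc) (rule sum.swap)
  have "expect (kernel_pow P i s) (\<lambda>x. f x + expect (P x) h - h x)
      = expect (kernel_pow P i s) f + (expect (kernel_pow P (Suc i) s) h - expect (kernel_pow P i s) h)"
    for i
    unfolding step[symmetric] by (simp add: algebra_simps sum.distrib sum_subtractf)
  then have "(\<Sum>i<n. expect (kernel_pow P i s) (\<lambda>x. f x + expect (P x) h - h x))
      = (\<Sum>i<n. expect (kernel_pow P i s) f)
        + (\<Sum>i<n. expect (kernel_pow P (Suc i) s) h - expect (kernel_pow P i s) h)"
    by (simp only: sum.distrib)
  also have "\<dots> = (\<Sum>i<n. expect (kernel_pow P i s) f)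
      + (expect (kernel_pow P n s) h - expect (kernel_pow P 0 s) h)"
    by (simp only: sum_lessThan_telescope[where f = "\<lambda>i. expect (kernel_pow P i s) h"])
  finally show ?thesis
    by simp
qed

locale stochastic_kernel =
  fixes P :: "'s::finite \<Rightarrow> 's \<Rightarrow> real"
  assumes row_distribution: "is_distribution (P s)"
begin

lemma kernel_pow_distribution: "is_distribution (kernel_pow P n s)"
proof (induction n)
  case 0
  show ?case
    by (simp add: is_distribution_def kernel_id_def)
next
  case (Suc n)
  have "sum (kernel_pow P (Suc n) s) UNIV = (\<Sum>z\<in>UNIV. kernel_pow P n s z * sum (P z) UNIV)"
    by (simp add: kernel_comp_def sum_distrib_left) (rule sum.swap)
  also have "\<dots> = 1"
    using Suc row_distribution by (simp add: is_distribution_def)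
  finally show ?case
    using Suc row_distribution
    by (auto simp: is_distribution_def kernel_comp_def intro!: sum_nonneg)
qed

lemma cesaro_kernel_bounds: "0 \<le> cesaro_kernel P n s y" "cesaro_kernel P n s y \<le> 1"
proof -
  have "0 \<le> kernel_pow P i s y" "kernel_pow P i s y \<le> 1" for i
    using kernel_pow_distribution[of i s] is_distribution_le_1[OF kernel_pow_distribution]
    by (auto simp: is_distribution_def)
  then have "0 \<le> (\<Sum>i<n. kernel_pow P i s y)" "(\<Sum>i<n. kernel_pow P i s y) \<le> real n"
    using sum_mono[of "{..<n}" "\<lambda>i. kernel_pow P i s y" "\<lambda>_. 1"] by (auto intro: sum_nonneg)
  then show "0 \<le> cesaro_kernel P n s y" "cesaro_kernel P n s y \<le> 1"
    by (auto simp: cesaro_kernel_def divide_le_eq)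
qed

text \<open>The averages are invariant under \<open>P\<close> from either side up to an error \<open>O(1/n)\<close>.\<close>

lemma cesaro_limit_point_invariant:
  assumes r: "strict_mono r" and L: "\<And>s y. (\<lambda>k. cesaro_kernel P (r k) s y) \<longlonglongrightarrow> L s y"
  shows "kernel_comp L P = L" "kernel_comp P L = L"
proof -
  have error: "(\<lambda>k. (kernel_pow P (r k) s y - kernel_id s y) / real (r k)) \<longlonglongrightarrow> 0" for s y
  proof (rule tendsto_0_le[where K = 1])
    show "(\<lambda>k. 1 / real (r k)) \<longlonglongrightarrow> 0"
      using LIMSEQ_subseq_LIMSEQ[OF lim_inverse_n' r] by (simp add: o_def)
    have "\<bar>kernel_pow P n s y - kernel_id s y\<bar> \<le> 1" for n
      using kernel_pow_distribution[of n s] is_distribution_le_1[OF kernel_pow_distribution, of n s y]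
      by (auto simp: is_distribution_def kernel_id_def)
    then show "\<forall>\<^sub>F k in sequentially.
        norm ((kernel_pow P (r k) s y - kernel_id s y) / real (r k)) \<le> norm (1 / real (r k)) * 1"
      by (simp add: divide_le_cancel abs_divide)
  qed
  show "kernel_comp L P = L"
  proof (intro ext)
    fix s y
    have "(\<lambda>k. kernel_comp (cesaro_kernel P (r k)) P s y) \<longlonglongrightarrow> kernel_comp L P s y"
      unfolding kernel_comp_def by (intro tendsto_intros L)
    moreover have "(\<lambda>k. kernel_comp (cesaro_kernel P (r k)) P s y) \<longlonglongrightarrow> L s y + 0"
      unfolding cesaro_kernel_comp_right by (intro tendsto_intros L error)
    ultimately show "kernel_comp L P s y = L s y"
      using LIMSEQ_unique by fastforce
  qed
  show "kernel_comp P L = L"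
  proof (intro ext)
    fix s y
    have "(\<lambda>k. kernel_comp P (cesaro_kernel P (r k)) s y) \<longlonglongrightarrow> kernel_comp P L s y"
      unfolding kernel_comp_def by (intro tendsto_intros L)
    moreover have "(\<lambda>k. kernel_comp P (cesaro_kernel P (r k)) s y) \<longlonglongrightarrow> L s y + 0"
      unfolding cesaro_kernel_comp_left by (intro tendsto_intros L error)
    ultimately show "kernel_comp P L s y = L s y"
      using LIMSEQ_unique by fastforce
  qed
qed

lemma kernel_comp_cesaro_kernel_invariant:
  assumes "n \<ge> 1"
  shows "kernel_comp L P = L \<Longrightarrow> kernel_comp L (cesaro_kernel P n) = L"
    and "kernel_comp P L = L \<Longrightarrow> kernel_comp (cesaro_kernel P n) L = L"
proof -
  assume inv: "kernel_comp L P = L"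
  have pow: "kernel_comp L (kernel_pow P i) = L" for i
    by (induction i) (simp_all add: inv flip: kernel_comp_assoc)
  have "kernel_comp L (cesaro_kernel P n) s y = (\<Sum>i<n. kernel_comp L (kernel_pow P i) s y) / real n"
    for s y
    by (simp add: kernel_comp_def cesaro_kernel_def sum_divide_distrib sum_distrib_left)
      (rule sum.swap)
  then show "kernel_comp L (cesaro_kernel P n) = L"
    using assms by (simp add: pow fun_eq_iff)
next
  assume inv: "kernel_comp P L = L"
  have pow: "kernel_comp (kernel_pow P i) L = L" for i
    by (induction i) (simp_all add: inv kernel_comp_assoc)
  have "kernel_comp (cesaro_kernel P n) L s y = (\<Sum>i<n. kernel_comp (kernel_pow P i) L s y) / real n"
    for s y
    by (simp add: kernel_comp_def cesaro_kernel_def sum_divide_distrib sum_distrib_right)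
      (rule sum.swap)
  then show "kernel_comp (cesaro_kernel P n) L = L"
    using assms by (simp add: pow fun_eq_iff)
qed

lemma cesaro_limit_point_unique:
  assumes r1: "strict_mono r1" and L1: "\<And>s y. (\<lambda>k. cesaro_kernel P (r1 k) s y) \<longlonglongrightarrow> L1 s y"
    and r2: "strict_mono r2" and L2: "\<And>s y. (\<lambda>k. cesaro_kernel P (r2 k) s y) \<longlonglongrightarrow> L2 s y"
  shows "L1 = L2"
proof (intro ext)
  fix s y
  have eventually_pos: "\<forall>\<^sub>F k in sequentially. 1 \<le> r k" if "strict_mono r" for r :: "nat \<Rightarrow> nat"
    using eventually_ge_at_top[of 1] by eventually_elim (meson le_trans seq_suble[OF that])
  have "(\<lambda>k. kernel_comp L1 (cesaro_kernel P (r2 k)) s y) \<longlonglongrightarrow> kernel_comp L1 L2 s y"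
    unfolding kernel_comp_def by (intro tendsto_intros L2)
  moreover have "\<forall>\<^sub>F k in sequentially. kernel_comp L1 (cesaro_kernel P (r2 k)) s y = L1 s y"
    using eventually_pos[OF r2] by eventually_elim
      (simp add: kernel_comp_cesaro_kernel_invariant(1)[OF _ cesaro_limit_point_invariant(1)[OF r1 L1]])
  ultimately have "kernel_comp L1 L2 s y = L1 s y"
    using LIMSEQ_unique tendsto_eventually by (metis (mono_tags) Lim_transform_eventually)
  moreover have "(\<lambda>k. kernel_comp (cesaro_kernel P (r1 k)) L2 s y) \<longlonglongrightarrow> kernel_comp L1 L2 s y"
    unfolding kernel_comp_def by (intro tendsto_intros L1)
  moreover have "\<forall>\<^sub>F k in sequentially. kernel_comp (cesaro_kernel P (r1 k)) L2 s y = L2 s y"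
    using eventually_pos[OF r1] by eventually_elim
      (simp add: kernel_comp_cesaro_kernel_invariant(2)[OF _ cesaro_limit_point_invariant(2)[OF r2 L2]])
  ultimately show "L1 s y = L2 s y"
    using LIMSEQ_unique tendsto_eventually by (metis (mono_tags) Lim_transform_eventually)
qed

lemma convergent_cesaro_kernel: "convergent (\<lambda>n. cesaro_kernel P n s y)"
proof -
  have "convergent (\<lambda>n. (\<lambda>(s, y). cesaro_kernel P n s y) (s, y))"
  proof (rule convergent_if_unique_pointwise_subseq_limit[where B = 1])
    show "\<bar>(\<lambda>(s, y). cesaro_kernel P n s y) i\<bar> \<le> 1" for n i
      using cesaro_kernel_bounds by (auto split: prod.split)
    show "L1 = L2"
      if "strict_mono r1" "strict_mono r2"
        and "\<And>i. (\<lambda>k. (\<lambda>(s, y). cesaro_kernel P (r1 k) s y) i) \<longlonglongrightarrow> L1 i"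
        and "\<And>i. (\<lambda>k. (\<lambda>(s, y). cesaro_kernel P (r2 k) s y) i) \<longlonglongrightarrow> L2 i"
      for r1 r2 and L1 L2 :: "'s \<times> 's \<Rightarrow> real"
      using cesaro_limit_point_unique[OF that(1) _ that(2), of "curry L1" "curry L2"] that(3,4)
      by (fastforce simp: fun_eq_iff)
  qed
  then show ?thesis
    by simp
qed

lemma sum_expect_kernel_pow_telescope_bound:
  "\<bar>(\<Sum>i<n. expect (kernel_pow P i s) f)
     - (\<Sum>i<n. expect (kernel_pow P i s) (\<lambda>x. f x + expect (P x) h - h x))\<bar> \<le> value_span h"
proof -
  have "expect (kernel_pow P i s) h \<le> Max (range h)" "Min (range h) \<le> expect (kernel_pow P i s) h" for i
    using expect_le_Max Min_le_expect kernel_pow_distribution by blast+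
  from this[of 0] this[of n] show ?thesis
    using kernel_pow_expect_telescope[where P = P and n = n and s = s and f = f and h = h]
    unfolding value_span_def abs_le_iff by linarith
qed

end

section \<open>Average reward\<close>

lemma state_dist_eq_kernel_pow: "state_dist p pol s n = kernel_pow (\<lambda>x. p x (pol x)) n s"
  by (induction n) (simp_all add: kernel_comp_def kernel_id_def fun_eq_iff)

lemma is_mdp_policy_kernel: "is_mdp r p \<Longrightarrow> stochastic_kernel (\<lambda>x. p x (pol x))"
  by unfold_locales (simp add: is_mdp_def is_distribution_def)

lemma avg_reward_LIMSEQ:
  assumes "stochastic_kernel (\<lambda>x. p x (pol x))"
  shows "(\<lambda>n. (\<Sum>i<n. \<Sum>x\<in>UNIV. state_dist p pol s1 i x * r x (pol x)) / real n)
    \<longlonglongrightarrow> avg_reward r p s1 pol"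
proof -
  let ?P = "\<lambda>x. p x (pol x)"
  have "(\<lambda>n. (\<Sum>i<n. \<Sum>x\<in>UNIV. state_dist p pol s1 i x * r x (pol x)) / real n)
      = (\<lambda>n. expect (cesaro_kernel ?P n s1) (\<lambda>x. r x (pol x)))"
    by (auto simp: fun_eq_iff cesaro_kernel_def state_dist_eq_kernel_pow sum_divide_distrib
        sum_distrib_right intro: sum.swap)
  moreover have "convergent (\<lambda>n. expect (cesaro_kernel ?P n s1) (\<lambda>x. r x (pol x)))"
    using stochastic_kernel.convergent_cesaro_kernel[OF assms]
    by (intro convergent_sum convergent_mult convergent_const)
  ultimately show ?thesis
    by (simp add: avg_reward_def convergent_LIMSEQ_iff)
qed

lemma avg_reward_le:
  assumes mdp: "is_mdp r p"
    and bellman: "\<And>s. r s (pol s) + expect (p s (pol s)) h \<le> h s + G"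
  shows "avg_reward r p s1 pol \<le> G"
proof (rule LIMSEQ_le_of_le_plus_inverse[OF avg_reward_LIMSEQ])
  interpret stochastic_kernel "\<lambda>x. p x (pol x)"
    using mdp by (rule is_mdp_policy_kernel)
  show "stochastic_kernel (\<lambda>x. p x (pol x))" ..
  fix n :: nat
  assume "1 \<le> n"
  have "r x (pol x) + expect (p x (pol x)) h - h x \<le> G" for x
    using bellman[of x] by linarith
  then have "expect (kernel_pow (\<lambda>x. p x (pol x)) i s1) (\<lambda>x. r x (pol x) + expect (p x (pol x)) h - h x) \<le> G"
    for i
    using expect_mono[OF kernel_pow_distribution, where g = "\<lambda>_. G"]
    by (simp add: kernel_pow_distribution)
  then have "(\<Sum>i<n. expect (kernel_pow (\<lambda>x. p x (pol x)) i s1)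
      (\<lambda>x. r x (pol x) + expect (p x (pol x)) h - h x)) \<le> (\<Sum>i<n. G)"
    by (intro sum_mono)
  then have "(\<Sum>i<n. expect (kernel_pow (\<lambda>x. p x (pol x)) i s1) (\<lambda>x. r x (pol x)))
      \<le> real n * G + value_span h"
    using sum_expect_kernel_pow_telescope_bound[where n = n and s = s1 and f = "\<lambda>x. r x (pol x)" and h = h]
    by (simp add: abs_le_iff)
  with \<open>1 \<le> n\<close> show "(\<Sum>i<n. \<Sum>x\<in>UNIV. state_dist p pol s1 i x * r x (pol x)) / real n \<le> G + value_span h / real n"
    by (simp add: state_dist_eq_kernel_pow divide_le_eq algebra_simps)
qed

lemma avg_reward_ge:
  assumes mdp: "is_mdp r p"
    and bellman: "\<And>s. h s + G \<le> r s (pol s) + expect (p s (pol s)) h"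
  shows "G \<le> avg_reward r p s1 pol"
proof -
  interpret stochastic_kernel "\<lambda>x. p x (pol x)"
    using mdp by (rule is_mdp_policy_kernel)
  have "- avg_reward r p s1 pol \<le> - G"
  proof (rule LIMSEQ_le_of_le_plus_inverse[OF tendsto_minus[OF avg_reward_LIMSEQ]])
    show "stochastic_kernel (\<lambda>x. p x (pol x))" ..
    fix n :: nat
    assume "1 \<le> n"
    have "G \<le> r x (pol x) + expect (p x (pol x)) h - h x" for x
      using bellman[of x] by linarith
    then have "G \<le> expect (kernel_pow (\<lambda>x. p x (pol x)) i s1)
        (\<lambda>x. r x (pol x) + expect (p x (pol x)) h - h x)" for i
      using expect_mono[OF kernel_pow_distribution, where h = "\<lambda>_. G"]
      by (simp add: kernel_pow_distribution)
    then have "(\<Sum>i<n. G) \<le> (\<Sum>i<n. expect (kernel_pow (\<lambda>x. p x (pol x)) i s1)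
        (\<lambda>x. r x (pol x) + expect (p x (pol x)) h - h x))"
      by (intro sum_mono)
    then have "real n * G - value_span h
        \<le> (\<Sum>i<n. expect (kernel_pow (\<lambda>x. p x (pol x)) i s1) (\<lambda>x. r x (pol x)))"
      using sum_expect_kernel_pow_telescope_bound[where n = n and s = s1 and f = "\<lambda>x. r x (pol x)" and h = h]
      by (simp add: abs_le_iff)
    with \<open>1 \<le> n\<close> show "- ((\<Sum>i<n. \<Sum>x\<in>UNIV. state_dist p pol s1 i x * r x (pol x)) / real n)
        \<le> - G + value_span h / real n"
      by (simp add: state_dist_eq_kernel_pow le_divide_eq algebra_simps)
  qed
  then show ?thesis
    by simp
qed

lemma opt_avg_reward_attained: "\<exists>pol. opt_avg_reward r p s1 = avg_reward r p s1 pol"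
proof -
  have "opt_avg_reward r p s1 \<in> range (avg_reward r p s1)"
    unfolding opt_avg_reward_def by (rule Max_in) auto
  then show ?thesis
    by auto
qed

lemma avg_reward_le_opt_avg_reward: "avg_reward r p s1 pol \<le> opt_avg_reward r p s1"
  unfolding opt_avg_reward_def by (rule Max_ge) auto

lemma opt_avg_reward_le_1:
  assumes "is_mdp r p"
  shows "opt_avg_reward r p s1 \<le> 1"
proof -
  obtain pol where "opt_avg_reward r p s1 = avg_reward r p s1 pol"
    using opt_avg_reward_attained by blast
  also have "\<dots> \<le> 1"
    by (rule avg_reward_le[OF assms, where h = "\<lambda>_. 0"]) (use assms in \<open>simp add: is_mdp_def\<close>)
  finally show ?thesis .
qed

lemma avg_reward_le_optimistic_rho:
  assumes "\<And>r p. (r, p) \<in> Ms \<Longrightarrow> is_mdp r p" and "(r, p) \<in> Ms"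
  shows "avg_reward r p s1 pol \<le> optimistic_rho Ms s1"
proof -
  have "bdd_above ((\<lambda>(r', p'). opt_avg_reward r' p' s1) ` Ms)"
    using assms(1) opt_avg_reward_le_1 by (fastforce intro: bdd_aboveI)
  then have "opt_avg_reward r p s1 \<le> optimistic_rho Ms s1"
    unfolding optimistic_rho_def using assms(2) by (force intro: cSup_upper)
  then show ?thesis
    using avg_reward_le_opt_avg_reward order_trans by blast
qed

lemma optimistic_rho_le:
  assumes "Ms \<noteq> {}" and "\<And>r p pol. (r, p) \<in> Ms \<Longrightarrow> avg_reward r p s1 pol \<le> B"
  shows "optimistic_rho Ms s1 \<le> B"
  unfolding optimistic_rho_def
proof (rule cSup_least)
  show "(\<lambda>(r', p'). opt_avg_reward r' p' s1) ` Ms \<noteq> {}"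
    using assms(1) by blast
  fix v
  assume "v \<in> (\<lambda>(r', p'). opt_avg_reward r' p' s1) ` Ms"
  then obtain r p where "(r, p) \<in> Ms" "v = opt_avg_reward r p s1"
    by auto
  with assms(2) opt_avg_reward_attained[of r p s1] show "v \<le> B"
    by metis
qed

section \<open>Optimistic discounted value iteration\<close>

text \<open>\<open>C s a\<close> is a set of admissible pairs (reward, transition row) at \<open>(s, a)\<close>; the plausible
  sets of UCRL are of the form \<open>rectangular_mdps C\<close>.\<close>

definition rectangular_mdps ::
  "('s::finite \<Rightarrow> 'a::finite \<Rightarrow> (real \<times> ('s \<Rightarrow> real)) set)
   \<Rightarrow> (('s \<Rightarrow> 'a \<Rightarrow> real) \<times> ('s \<Rightarrow> 'a \<Rightarrow> 's \<Rightarrow> real)) set" where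
  "rectangular_mdps C = {(r, p). \<forall>s a. (r s a, p s a) \<in> C s a}"

text \<open>The discounted counterpart of the extended value iteration of UCRL.\<close>

definition optimistic_backup ::
  "('s::finite \<Rightarrow> 'a \<Rightarrow> (real \<times> ('s \<Rightarrow> real)) set) \<Rightarrow> real \<Rightarrow> ('s \<Rightarrow> real) \<Rightarrow> 's \<Rightarrow> real" where
  "optimistic_backup C \<beta> V s = Sup {x + \<beta> * expect q V | a x q. (x, q) \<in> C s a}"

fun value_iteration ::
  "('s::finite \<Rightarrow> 'a \<Rightarrow> (real \<times> ('s \<Rightarrow> real)) set) \<Rightarrow> real \<Rightarrow> nat \<Rightarrow> 's \<Rightarrow> real" where
  "value_iteration C \<beta> 0 = (\<lambda>_. 0)"
| "value_iteration C \<beta> (Suc n) = optimistic_backup C \<beta> (value_iteration C \<beta> n)"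

locale rectangular_family =
  fixes C :: "'s::finite \<Rightarrow> 'a::finite \<Rightarrow> (real \<times> ('s \<Rightarrow> real)) set"
  assumes admissible: "(x, q) \<in> C s a \<Longrightarrow> 0 \<le> x \<and> x \<le> 1 \<and> is_distribution q"
    and nonempty: "C s a \<noteq> {}"
begin

lemma rectangular_mdps_is_mdp:
  assumes "(r, p) \<in> rectangular_mdps C"
  shows "is_mdp r p"
proof -
  have "0 \<le> r s a \<and> r s a \<le> 1 \<and> is_distribution (p s a)" for s a
    using assms admissible[of "r s a" "p s a" s a] by (simp add: rectangular_mdps_def)
  then show ?thesis
    unfolding is_mdp_def is_distribution_def by blast
qed

lemma rectangular_mdps_extend:
  assumes "\<And>s. (x s, q s) \<in> C s (A s)"
  obtains r p where "(r, p) \<in> rectangular_mdps C" "\<And>s. r s (A s) = x s" "\<And>s. p s (A s) = q s"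
proof -
  define d where "d s a = (SOME t. t \<in> C s a)" for s a
  have d: "d s a \<in> C s a" for s a
    unfolding d_def using nonempty[of s a] by (simp add: some_in_eq)
  define r where "r s a = (if a = A s then x s else fst (d s a))" for s a
  define p where "p s a = (if a = A s then q s else snd (d s a))" for s a
  have "(r, p) \<in> rectangular_mdps C"
    using assms d by (simp add: rectangular_mdps_def r_def p_def)
  then show ?thesis
    using that by (simp add: r_def p_def)
qed

end

locale discounted_rectangular_family = rectangular_family +
  fixes \<beta> :: real
  assumes discount: "0 \<le> \<beta>" "\<beta> < 1"
begin

lemma backup_bdd_above: "bdd_above {x + \<beta> * expect q V | a x q. (x, q) \<in> C s a}"
proof (rule bdd_aboveI)
  fix v
  assume "v \<in> {x + \<beta> * expect q V | a x q. (x, q) \<in> C s a}"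
  then obtain a x q where xq: "(x, q) \<in> C s a" "v = x + \<beta> * expect q V"
    by blast
  have "\<beta> * expect q V \<le> \<beta> * Max (range V)"
    using admissible[OF xq(1)] discount by (intro mult_left_mono expect_le_Max) auto
  then show "v \<le> 1 + \<beta> * Max (range V)"
    using admissible[OF xq(1)] xq(2) by linarith
qed

lemma backup_upper: "(x, q) \<in> C s a \<Longrightarrow> x + \<beta> * expect q V \<le> optimistic_backup C \<beta> V s"
  unfolding optimistic_backup_def by (rule cSup_upper[OF _ backup_bdd_above]) blast

lemma backup_least:
  "(\<And>a x q. (x, q) \<in> C s a \<Longrightarrow> x + \<beta> * expect q V \<le> B) \<Longrightarrow> optimistic_backup C \<beta> V s \<le> B"
  unfolding optimistic_backup_def using nonempty by (intro cSup_least) fastforce+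

lemma backup_approx:
  assumes "0 < e"
  obtains a x q where "(x, q) \<in> C s a" "optimistic_backup C \<beta> V s - e < x + \<beta> * expect q V"
proof -
  have "optimistic_backup C \<beta> V s - e < Sup {x + \<beta> * expect q V | a x q. (x, q) \<in> C s a}"
    using assms by (simp add: optimistic_backup_def)
  then show ?thesis
    using that nonempty by (subst (asm) less_cSup_iff[OF _ backup_bdd_above]) fastforce+
qed

lemma backup_mono: "(\<And>y. V y \<le> W y) \<Longrightarrow> optimistic_backup C \<beta> V s \<le> optimistic_backup C \<beta> W s"
proof (rule backup_least)
  fix a x q
  assume "\<And>y. V y \<le> W y" and xq: "(x, q) \<in> C s a"
  then have "\<beta> * expect q V \<le> \<beta> * expect q W"
    using admissible[OF xq] discount by (intro mult_left_mono expect_mono) auto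
  then show "x + \<beta> * expect q V \<le> optimistic_backup C \<beta> W s"
    using backup_upper[OF xq, of W] by linarith
qed

lemma backup_nonexpansive:
  "optimistic_backup C \<beta> V s \<le> optimistic_backup C \<beta> W s + \<beta> * (\<Sum>y\<in>UNIV. \<bar>V y - W y\<bar>)"
proof (rule backup_least)
  fix a x q
  assume xq: "(x, q) \<in> C s a"
  have "expect q V = expect q W + expect q (\<lambda>y. V y - W y)"
    by (simp add: algebra_simps sum_subtractf)
  also have "\<dots> \<le> expect q W + (\<Sum>y\<in>UNIV. \<bar>V y - W y\<bar>)"
    using expect_le_sum_abs[of q "\<lambda>y. V y - W y"] admissible[OF xq] by simp
  finally have "\<beta> * expect q V \<le> \<beta> * expect q W + \<beta> * (\<Sum>y\<in>UNIV. \<bar>V y - W y\<bar>)"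
    using discount by (simp add: mult_left_mono flip: distrib_left)
  then show "x + \<beta> * expect q V \<le> optimistic_backup C \<beta> W s + \<beta> * (\<Sum>y\<in>UNIV. \<bar>V y - W y\<bar>)"
    using backup_upper[OF xq, of W] by linarith
qed

lemma backup_bounds:
  assumes "\<And>y. 0 \<le> V y \<and> V y \<le> 1 / (1 - \<beta>)"
  shows "0 \<le> optimistic_backup C \<beta> V s \<and> optimistic_backup C \<beta> V s \<le> 1 / (1 - \<beta>)"
proof
  obtain x q where xq: "(x, q) \<in> C s undefined"
    using nonempty by fast
  have "0 \<le> \<beta> * expect q V"
    using admissible[OF xq] assms discount
    by (intro mult_nonneg_nonneg sum_nonneg) (auto simp: is_distribution_def)
  then show "0 \<le> optimistic_backup C \<beta> V s"
    using admissible[OF xq] backup_upper[OF xq, of V] by linarith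
  show "optimistic_backup C \<beta> V s \<le> 1 / (1 - \<beta>)"
  proof (rule backup_least)
    fix a x q
    assume xq: "(x, q) \<in> C s a"
    have "\<beta> * expect q V \<le> \<beta> * (1 / (1 - \<beta>))"
      using admissible[OF xq] assms discount
      by (intro mult_left_mono) (auto intro: order_trans[OF expect_mono expect_const[THEN eq_refl]])
    moreover have "1 + \<beta> * (1 / (1 - \<beta>)) = 1 / (1 - \<beta>)"
      using discount by (simp add: field_simps)
    ultimately show "x + \<beta> * expect q V \<le> 1 / (1 - \<beta>)"
      using admissible[OF xq] by linarith
  qed
qed

lemma value_iteration_bounds: "0 \<le> value_iteration C \<beta> n s \<and> value_iteration C \<beta> n s \<le> 1 / (1 - \<beta>)"
  using discount by (induction n arbitrary: s) (simp_all add: backup_bounds)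

lemma value_iteration_incseq: "value_iteration C \<beta> n s \<le> value_iteration C \<beta> (Suc n) s"
proof (induction n arbitrary: s)
  case 0
  show ?case
    using backup_bounds[of "\<lambda>_. 0" s] discount by simp
next
  case (Suc n)
  then show ?case
    using backup_mono by simp
qed

lemma backup_value_iteration_limit:
  assumes lim: "\<And>s. (\<lambda>n. value_iteration C \<beta> n s) \<longlonglongrightarrow> V s"
  shows "optimistic_backup C \<beta> V = V"
proof
  fix s
  let ?dist = "\<lambda>n. \<beta> * (\<Sum>y\<in>UNIV. \<bar>V y - value_iteration C \<beta> n y\<bar>)"
  have "?dist \<longlonglongrightarrow> \<beta> * (\<Sum>y\<in>UNIV. \<bar>V y - V y\<bar>)"
    by (intro tendsto_intros lim)
  then have dist0: "?dist \<longlonglongrightarrow> 0"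
    by simp
  have bound: "\<bar>value_iteration C \<beta> (Suc n) s - optimistic_backup C \<beta> V s\<bar> \<le> ?dist n" for n
  proof -
    have "\<beta> * (\<Sum>y\<in>UNIV. \<bar>value_iteration C \<beta> n y - V y\<bar>) = ?dist n"
      by (intro arg_cong[where f = "(*) \<beta>"] sum.cong refl abs_minus_commute)
    then show ?thesis
      using backup_nonexpansive[of V s "value_iteration C \<beta> n"]
        backup_nonexpansive[of "value_iteration C \<beta> n" s V]
      unfolding value_iteration.simps abs_le_iff by linarith
  qed
  have "(\<lambda>n. value_iteration C \<beta> (Suc n) s - optimistic_backup C \<beta> V s) \<longlonglongrightarrow> 0"
  proof (rule tendsto_0_le[OF dist0, where K = 1])
    show "\<forall>\<^sub>F n in sequentially.
        norm (value_iteration C \<beta> (Suc n) s - optimistic_backup C \<beta> V s) \<le> norm (?dist n) * 1"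
      using bound abs_ge_self[of "?dist _"] unfolding real_norm_def mult_1_right
      by (intro always_eventually allI) (meson order_trans)
  qed
  then have "(\<lambda>n. value_iteration C \<beta> (Suc n) s) \<longlonglongrightarrow> optimistic_backup C \<beta> V s"
    by (rule LIM_zero_cancel)
  moreover have "(\<lambda>n. value_iteration C \<beta> (Suc n) s) \<longlonglongrightarrow> V s"
    using lim by (rule LIMSEQ_Suc)
  ultimately show "optimistic_backup C \<beta> V s = V s"
    using LIMSEQ_unique by blast
qed

lemma backup_fixed_point_exists:
  obtains V where "\<And>s. 0 \<le> V s \<and> V s \<le> 1 / (1 - \<beta>)" and "optimistic_backup C \<beta> V = V"
proof -
  define V where "V s = (SUP n. value_iteration C \<beta> n s)" for s
  have lim: "(\<lambda>n. value_iteration C \<beta> n s) \<longlonglongrightarrow> V s" for s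
    unfolding V_def using value_iteration_bounds value_iteration_incseq
    by (intro LIMSEQ_incseq_SUP) (auto intro!: bdd_aboveI incseq_SucI)
  have "0 \<le> V s \<and> V s \<le> 1 / (1 - \<beta>)" for s
    using LIMSEQ_le_const[OF lim] LIMSEQ_le_const2[OF lim] value_iteration_bounds by meson
  with backup_value_iteration_limit[OF lim] that show ?thesis
    by blast
qed

end

section \<open>The span of the fixed point\<close>

lemma not_hit_nonneg: "(\<And>x a y. 0 \<le> p x a y) \<Longrightarrow> 0 \<le> not_hit p pol s' n x"
  by (induction n arbitrary: x) (auto intro!: sum_nonneg)

lemma expect_ge_not_hit_step:
  fixes p :: "'s::finite \<Rightarrow> 'a \<Rightarrow> 's \<Rightarrow> real"
  assumes q: "is_distribution (p x (pol x))"
    and V: "\<And>y. V s' - (\<Sum>j<n. not_hit p pol s' j y) - not_hit p pol s' n y * V s' \<le> V y"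
  shows "V s' - (\<Sum>j<n. not_hit p pol s' (Suc j) x) - not_hit p pol s' (Suc n) x * V s'
    \<le> expect (p x (pol x)) V"
proof -
  let ?W = "V s'" and ?U = "UNIV - {s'}" and ?q = "p x (pol x)"
  define H where "H y = (\<Sum>j<n. not_hit p pol s' j y)" for y
  have H_Suc: "(\<Sum>j<n. not_hit p pol s' (Suc j) x) = (\<Sum>y\<in>?U. ?q y * H y)"
    unfolding H_def by (simp add: sum_distrib_left) (rule sum.swap)
  have sum_U: "sum ?q ?U = 1 - ?q s'"
    using q by (simp add: is_distribution_def sum.remove[of UNIV s'])
  have "(\<Sum>y\<in>?U. ?q y * (?W - H y - not_hit p pol s' n y * ?W)) \<le> (\<Sum>y\<in>?U. ?q y * V y)"
    using q V by (intro sum_mono mult_left_mono) (auto simp: is_distribution_def H_def)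
  moreover have "(\<Sum>y\<in>?U. ?q y * (?W - H y - not_hit p pol s' n y * ?W))
      = ?W * sum ?q ?U - (\<Sum>y\<in>?U. ?q y * H y) - (\<Sum>y\<in>?U. ?q y * not_hit p pol s' n y) * ?W"
    by (simp add: algebra_simps sum_subtractf sum.distrib sum_distrib_left sum_distrib_right)
  moreover have "expect ?q V = ?q s' * ?W + (\<Sum>y\<in>?U. ?q y * V y)"
    by (simp add: sum.remove[of UNIV s'])
  ultimately show ?thesis
    using sum_U H_Suc by (simp add: algebra_simps)
qed

lemma sum_not_hit_le_exp_hit_time:
  assumes "\<And>x a y. 0 \<le> p x a y"
  shows "ennreal (\<Sum>j<n. not_hit p pol s' j s) \<le> exp_hit_time p pol s s'"
proof -
  have "ennreal (\<Sum>j<n. not_hit p pol s' j s) = (\<Sum>j<n. ennreal (not_hit p pol s' j s))"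
    using assms by (intro sum_ennreal[symmetric] not_hit_nonneg)
  also have "\<dots> \<le> exp_hit_time p pol s s'"
    unfolding exp_hit_time_def by (rule sum_le_suminf[OF summableI]) auto
  finally show ?thesis .
qed

lemma exp_hit_time_ge_1: "1 \<le> exp_hit_time p pol s s'"
proof -
  have "(\<Sum>n\<in>{0}. ennreal (not_hit p pol s' n s)) \<le> exp_hit_time p pol s s'"
    unfolding exp_hit_time_def by (intro sum_le_suminf summableI) auto
  then show ?thesis
    by simp
qed

lemma INF_exp_hit_time_le_diameter:
  "s \<noteq> s' \<Longrightarrow> (INF pol. exp_hit_time p pol s s') \<le> diameter p"
  unfolding Defs.diameter_def by (rule SUP_upper2[where i = "(s, s')"]) auto

lemma diameter_ge_1:
  fixes p :: "'s::finite \<Rightarrow> 'a \<Rightarrow> 's \<Rightarrow> real" and s s' :: 's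
  assumes "s \<noteq> s'"
  shows "1 \<le> diameter p"
proof -
  have "1 \<le> (INF pol. exp_hit_time p pol s s')"
    by (rule INF_greatest) (rule exp_hit_time_ge_1)
  also have "\<dots> \<le> diameter p"
    by (rule INF_exp_hit_time_le_diameter[OF assms])
  finally show ?thesis .
qed

lemma exists_policy_hit_time_le_diameter:
  fixes p :: "'s::finite \<Rightarrow> 'a::finite \<Rightarrow> 's \<Rightarrow> real"
  assumes "s \<noteq> s'"
  obtains pol where "exp_hit_time p pol s s' \<le> diameter p"
proof -
  let ?times = "range (\<lambda>pol. exp_hit_time p pol s s')"
  have "Inf ?times \<in> ?times"
    using Min_in[of ?times] by (simp add: cInf_eq_Min)
  then obtain pol where "exp_hit_time p pol s s' = Inf ?times"
    by auto
  then have "exp_hit_time p pol s s' \<le> diameter p"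
    using INF_exp_hit_time_le_diameter[OF assms, of p] by simp
  then show ?thesis
    by (rule that)
qed

context discounted_rectangular_family
begin

text \<open>The true MDP \<open>(r1, p1)\<close> lies in the family, so a fixed point \<open>V\<close> satisfies
  \<open>\<beta> expect (p1 x (pol x)) V \<le> V x\<close>; unrolling this until \<open>s'\<close> is hit costs at most
  one unit per step.\<close>

lemma fixed_point_hitting_bound:
  assumes fixed: "optimistic_backup C \<beta> V = V"
    and bounds: "\<And>s. 0 \<le> V s \<and> V s \<le> 1 / (1 - \<beta>)"
    and true_mdp: "(r1, p1) \<in> rectangular_mdps C"
  shows "V s' - (\<Sum>j<n. not_hit p1 pol s' j x) - not_hit p1 pol s' n x * V s' \<le> V x"
proof (induction n arbitrary: x)
  case 0
  then show ?case
    using bounds[of x] by simp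
next
  case (Suc n)
  let ?W = "V s'" and ?A = "\<Sum>j<n. not_hit p1 pol s' (Suc j) x" and ?B = "not_hit p1 pol s' (Suc n) x * V s'"
  have mdp: "is_mdp r1 p1"
    using true_mdp by (rule rectangular_mdps_is_mdp)
  have nonneg: "0 \<le> ?A" "0 \<le> ?B" "0 \<le> r1 x (pol x)"
    using mdp bounds[of s'] by (auto simp: is_mdp_def intro!: sum_nonneg mult_nonneg_nonneg not_hit_nonneg)
  have H_Suc: "(\<Sum>j<Suc n. not_hit p1 pol s' j x) = 1 + ?A"
    by (simp add: sum.lessThan_Suc_shift del: sum.lessThan_Suc not_hit.simps(2))
  show ?case
  proof (cases "x = s'")
    case True
    with nonneg H_Suc show ?thesis
      by simp
  next
    case False
    have "?W - ?A - ?B \<le> expect (p1 x (pol x)) V"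
      using mdp Suc.IH by (intro expect_ge_not_hit_step) (simp add: is_mdp_def is_distribution_def)
    then have "\<beta> * (?W - ?A - ?B) \<le> \<beta> * expect (p1 x (pol x)) V"
      using discount by (intro mult_left_mono) auto
    moreover have "r1 x (pol x) + \<beta> * expect (p1 x (pol x)) V \<le> V x"
      using backup_upper[of "r1 x (pol x)" "p1 x (pol x)" x "pol x" V] true_mdp fixed
      by (simp add: rectangular_mdps_def)
    moreover have "(1 - \<beta>) * ?W \<le> 1" "\<beta> * ?A \<le> ?A" "\<beta> * ?B \<le> ?B"
      using bounds[of s'] discount nonneg by (auto simp: field_simps intro: mult_left_le_one_le)
    ultimately show ?thesis
      using nonneg H_Suc by (simp add: algebra_simps)
  qed
qed

lemma fixed_point_diff_le_hit_time:
  assumes fixed: "optimistic_backup C \<beta> V = V"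
    and bounds: "\<And>s. 0 \<le> V s \<and> V s \<le> 1 / (1 - \<beta>)"
    and true_mdp: "(r1, p1) \<in> rectangular_mdps C"
    and hit: "exp_hit_time p1 pol s s' \<le> ennreal D"
  shows "V s' - V s \<le> D"
proof -
  have p1: "\<And>x a y. 0 \<le> p1 x a y"
    using rectangular_mdps_is_mdp[OF true_mdp] by (simp add: is_mdp_def)
  let ?nh = "\<lambda>j. not_hit p1 pol s' j s"
  have partial: "ennreal (\<Sum>j<n. ?nh j) \<le> ennreal D" for n
    by (rule order_trans[OF sum_not_hit_le_exp_hit_time[OF p1] hit])
  from partial[of 1] have "0 \<le> D"
    using ennreal_le_iff2 by force
  with partial have partial_le: "(\<Sum>j<n. ?nh j) \<le> D" for n
    using ennreal_le_iff by blast
  have "summable ?nh"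
    using partial_le not_hit_nonneg[OF p1] by (intro summableI_nonneg_bounded)
  then have "?nh \<longlonglongrightarrow> 0"
    by (rule summable_LIMSEQ_zero)
  then have "(\<lambda>n. V s' - D - ?nh n * V s') \<longlonglongrightarrow> V s' - D - 0 * V s'"
    by (intro tendsto_intros)
  moreover have "V s' - D - ?nh n * V s' \<le> V s" for n
    using fixed_point_hitting_bound[OF fixed bounds true_mdp, where s' = s' and n = n and pol = pol and x = s]
      partial_le[of n]
    by linarith
  ultimately show ?thesis
    using LIMSEQ_le_const2 by force
qed

lemma fixed_point_value_span_le:
  assumes fixed: "optimistic_backup C \<beta> V = V"
    and bounds: "\<And>s. 0 \<le> V s \<and> V s \<le> 1 / (1 - \<beta>)"
    and true_mdp: "(r1, p1) \<in> rectangular_mdps C"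
    and diameter: "diameter p1 \<le> ennreal D" and "0 \<le> D"
  shows "value_span V \<le> D"
proof -
  have "Max (range V) \<in> range V" "Min (range V) \<in> range V"
    by (rule Max_in Min_in; simp)+
  then obtain smax smin where "V smax = Max (range V)" "V smin = Min (range V)"
    by (metis rangeE)
  moreover have "V smax - V smin \<le> D"
  proof (cases "smin = smax")
    case False
    then obtain pol where "exp_hit_time p1 pol smin smax \<le> diameter p1"
      by (rule exists_policy_hit_time_le_diameter)
    then have "exp_hit_time p1 pol smin smax \<le> ennreal D"
      using diameter by (rule order_trans)
    then show ?thesis
      by (rule fixed_point_diff_le_hit_time[OF fixed bounds true_mdp])
  qed (simp add: \<open>0 \<le> D\<close>)
  ultimately show ?thesis
    by (simp add: value_span_def)
qed

end

section \<open>Optimistic average reward of rectangular sets\<close>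

context discounted_rectangular_family
begin

lemma avg_reward_le_fixed_point:
  assumes fixed: "optimistic_backup C \<beta> V = V" and M: "(r, p) \<in> rectangular_mdps C"
  shows "avg_reward r p s1 pol \<le> (1 - \<beta>) * Max (range V)"
proof (rule avg_reward_le[OF rectangular_mdps_is_mdp[OF M]])
  fix s
  have q: "is_distribution (p s (pol s))"
    using rectangular_mdps_is_mdp[OF M] by (simp add: is_mdp_def is_distribution_def)
  have "r s (pol s) + \<beta> * expect (p s (pol s)) V \<le> V s"
    using M backup_upper[of "r s (pol s)" "p s (pol s)" s "pol s" V] fixed
    by (simp add: rectangular_mdps_def)
  moreover have "(1 - \<beta>) * expect (p s (pol s)) V \<le> (1 - \<beta>) * Max (range V)"
    using discount expect_le_Max[OF q] by (intro mult_left_mono) auto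
  ultimately show "r s (pol s) + expect (p s (pol s)) V \<le> V s + (1 - \<beta>) * Max (range V)"
    by (simp add: algebra_simps)
qed

text \<open>The witness follows the greedy choices of \<open>V\<close>, each moved into \<open>C0\<close> by \<open>approx\<close>.\<close>

lemma greedy_mdp_avg_reward_ge:
  assumes fixed: "optimistic_backup C \<beta> V = V"
    and C0: "rectangular_family C0"
    and approx: "\<And>s a x q. (x, q) \<in> C s a \<Longrightarrow>
      \<exists>(x0, q0) \<in> C0 s a. x + expect q V - Vr - Vp * value_span V \<le> x0 + expect q0 V"
    and e: "0 < e"
  obtains r p pol where "(r, p) \<in> rectangular_mdps C0"
    and "(1 - \<beta>) * Min (range V) - e - Vr - Vp * value_span V \<le> avg_reward r p s1 pol"
proof -
  interpret C0: rectangular_family C0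
    by (fact C0)
  have "\<forall>s. \<exists>a x q. (x, q) \<in> C s a \<and> V s - e < x + \<beta> * expect q V"
    using backup_approx[OF e] fixed by metis
  then obtain A X Q where greedy: "\<forall>s. (X s, Q s) \<in> C s (A s)"
    and near_max: "\<forall>s. V s - e < X s + \<beta> * expect (Q s) V"
    by (auto dest!: choice)
  have "\<forall>s. \<exists>x0 q0. (x0, q0) \<in> C0 s (A s)
      \<and> X s + expect (Q s) V - Vr - Vp * value_span V \<le> x0 + expect q0 V"
    using approx greedy by blast
  then obtain X0 Q0 where in_C0: "\<forall>s. (X0 s, Q0 s) \<in> C0 s (A s)"
    and moved: "\<forall>s. X s + expect (Q s) V - Vr - Vp * value_span V \<le> X0 s + expect (Q0 s) V"
    by (auto dest!: choice)
  obtain r p where M: "(r, p) \<in> rectangular_mdps C0" "\<And>s. r s (A s) = X0 s" "\<And>s. p s (A s) = Q0 s"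
    using C0.rectangular_mdps_extend in_C0 by blast
  have "V s + ((1 - \<beta>) * Min (range V) - e - Vr - Vp * value_span V) \<le> r s (A s) + expect (p s (A s)) V"
    for s
  proof -
    have "(1 - \<beta>) * Min (range V) \<le> (1 - \<beta>) * expect (Q s) V"
      using discount admissible[of "X s" "Q s" s "A s"] greedy by (intro mult_left_mono Min_le_expect) auto
    then show ?thesis
      using near_max[THEN spec, of s] moved[THEN spec, of s] M(2,3) by (simp add: algebra_simps)
  qed
  then show ?thesis
    using that M(1) avg_reward_ge[OF C0.rectangular_mdps_is_mdp[OF M(1)]] by blast
qed

end

theorem optimistic_rho_rectangular_le:
  assumes C: "rectangular_family C" and C0: "rectangular_family C0"
    and true_mdp: "(r1, p1) \<in> rectangular_mdps C"
    and diameter: "diameter p1 \<le> ennreal D" and "0 \<le> D"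
    and approx: "\<And>s a x q h. (x, q) \<in> C s a \<Longrightarrow>
      \<exists>(x0, q0) \<in> C0 s a. x + expect q h - Vr - Vp * value_span h \<le> x0 + expect q0 h"
    and "0 \<le> Vp"
  shows "optimistic_rho (rectangular_mdps C) s1 \<le> optimistic_rho (rectangular_mdps C0) s1 + Vr + D * Vp"
proof (rule optimistic_rho_le)
  show "rectangular_mdps C \<noteq> {}"
    using true_mdp by blast
  fix r p pol
  assume M: "(r, p) \<in> rectangular_mdps C"
  show "avg_reward r p s1 pol \<le> optimistic_rho (rectangular_mdps C0) s1 + Vr + D * Vp"
  proof (rule le_of_forall_discount_le)
    fix \<beta> :: real
    assume "0 \<le> \<beta>" "\<beta> < 1"
    then interpret discounted_rectangular_family C \<beta>
      using C by (simp add: discounted_rectangular_family_def discounted_rectangular_family_axioms_def)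
    obtain V where bounds: "\<And>s. 0 \<le> V s \<and> V s \<le> 1 / (1 - \<beta>)" and fixed: "optimistic_backup C \<beta> V = V"
      using backup_fixed_point_exists by blast
    have span: "value_span V \<le> D"
      using fixed_point_value_span_le[OF fixed bounds true_mdp diameter \<open>0 \<le> D\<close>] .
    obtain r0 p0 pol0 where M0: "(r0, p0) \<in> rectangular_mdps C0"
      and lower: "(1 - \<beta>) * Min (range V) - (1 - \<beta>) - Vr - Vp * value_span V \<le> avg_reward r0 p0 s1 pol0"
      using greedy_mdp_avg_reward_ge[OF fixed C0 approx] \<open>\<beta> < 1\<close> by (metis diff_gt_0_iff_gt)
    have "avg_reward r0 p0 s1 pol0 \<le> optimistic_rho (rectangular_mdps C0) s1"
      using M0 rectangular_family.rectangular_mdps_is_mdp[OF C0] by (intro avg_reward_le_optimistic_rho)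
    moreover have "avg_reward r p s1 pol \<le> (1 - \<beta>) * Min (range V) + (1 - \<beta>) * value_span V"
      using avg_reward_le_fixed_point[OF fixed M] by (simp add: value_span_def algebra_simps)
    moreover have "(1 - \<beta>) * value_span V \<le> (1 - \<beta>) * D" "Vp * value_span V \<le> Vp * D"
      using span \<open>\<beta> < 1\<close> \<open>0 \<le> Vp\<close> by (simp_all add: mult_left_mono)
    ultimately show "avg_reward r p s1 pol
        \<le> optimistic_rho (rectangular_mdps C0) s1 + Vr + D * Vp + (1 - \<beta>) * (D + 1)"
      using lower by (simp add: algebra_simps)
  qed
qed

section \<open>The confidence sets of UCRL\<close>

definition confidence_log :: "real \<Rightarrow> nat \<Rightarrow> 's::finite itself \<Rightarrow> 'a::finite itself \<Rightarrow> real" where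
  "confidence_log \<delta> tk _ _ = ln (8 * real CARD('s) * real CARD('a) * real tk ^ 3 / \<delta>)"

definition reward_radius ::
  "real \<Rightarrow> (nat \<Rightarrow> 's::finite) \<Rightarrow> (nat \<Rightarrow> 'a::finite) \<Rightarrow> nat \<Rightarrow> 's \<Rightarrow> 'a \<Rightarrow> real" where
  "reward_radius \<delta> st ac tk s a =
     sqrt (8 * confidence_log \<delta> tk TYPE('s) TYPE('a) / real (max 1 (N_count st ac tk s a)))"

definition transition_radius ::
  "real \<Rightarrow> (nat \<Rightarrow> 's::finite) \<Rightarrow> (nat \<Rightarrow> 'a::finite) \<Rightarrow> nat \<Rightarrow> 's \<Rightarrow> 'a \<Rightarrow> real" where
  "transition_radius \<delta> st ac tk s a =
     sqrt (8 * real CARD('s) * confidence_log \<delta> tk TYPE('s) TYPE('a) / real (max 1 (N_count st ac tk s a)))"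

definition confidence_set :: "real \<Rightarrow> real \<Rightarrow> real \<Rightarrow> (nat \<Rightarrow> 's::finite) \<Rightarrow> (nat \<Rightarrow> 'a::finite)
    \<Rightarrow> (nat \<Rightarrow> real) \<Rightarrow> nat \<Rightarrow> 's \<Rightarrow> 'a \<Rightarrow> (real \<times> ('s \<Rightarrow> real)) set" where
  "confidence_set Vr Vp \<delta> st ac rw tk s a = {(x, q). 0 \<le> x \<and> x \<le> 1 \<and> is_distribution q
     \<and> \<bar>x - r_hat st ac rw tk s a\<bar> \<le> Vr + reward_radius \<delta> st ac tk s a
     \<and> (\<Sum>y\<in>UNIV. \<bar>q y - p_hat st ac tk s a y\<bar>) \<le> Vp + transition_radius \<delta> st ac tk s a}"

lemma plausible_set_eq_rectangular_mdps:
  "plausible_set Vr Vp \<delta> st ac rw tk = rectangular_mdps (confidence_set Vr Vp \<delta> st ac rw tk)"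
  unfolding plausible_set_def rectangular_mdps_def confidence_set_def is_mdp_def is_distribution_def
    reward_radius_def transition_radius_def confidence_log_def
  by auto

lemma rectangular_family_confidence_set:
  "(\<And>s a. confidence_set Vr Vp \<delta> st ac rw tk s a \<noteq> {}) \<Longrightarrow>
    rectangular_family (confidence_set Vr Vp \<delta> st ac rw tk)"
  by unfold_locales (auto simp: confidence_set_def)

lemma confidence_log_ge_1:
  assumes "1 \<le> tk" "0 < \<delta>" "\<delta> < 1"
  shows "1 \<le> confidence_log \<delta> tk TYPE('s::finite) TYPE('a::finite)"
proof -
  have "1 \<le> real CARD('s)" "1 \<le> real CARD('a)" "1 \<le> real tk ^ 3"
    using assms(1) by (simp_all add: Suc_le_eq)
  then have "1 * 1 * 1 \<le> real CARD('s) * real CARD('a) * real tk ^ 3"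
    by (intro mult_mono) auto
  then have "8 \<le> 8 * real CARD('s) * real CARD('a) * real tk ^ 3 / \<delta>"
    using assms(2,3) by (simp add: le_divide_eq)
  moreover have "exp 1 \<le> (8::real)"
    using e_less_272 by simp
  ultimately show ?thesis
    unfolding confidence_log_def by (simp add: ln_ge_iff)
qed

lemma visits_finite: "finite (visits st ac tk s a)"
  by (rule finite_subset[of _ "{..<tk}"]) (auto simp: visits_def)

lemma r_hat_bounds:
  assumes "\<And>\<tau>. 0 \<le> rw \<tau> \<and> rw \<tau> \<le> 1"
  shows "0 \<le> r_hat st ac rw tk s a \<and> r_hat st ac rw tk s a \<le> 1"
proof -
  let ?V = "visits st ac tk s a"
  have "0 \<le> (\<Sum>\<tau>\<in>?V. rw \<tau>)" "(\<Sum>\<tau>\<in>?V. rw \<tau>) \<le> real (card ?V)"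
    using assms sum_mono[of ?V rw "\<lambda>_. 1"] by (auto intro: sum_nonneg)
  then show ?thesis
    using visits_finite[of st ac tk s a]
    by (cases "card ?V = 0") (auto simp: r_hat_def N_count_def divide_le_eq)
qed

lemma p_hat_unvisited: "N_count st ac tk s a = 0 \<Longrightarrow> p_hat st ac tk s a y = 0"
  using visits_finite[of st ac tk s a] by (simp add: p_hat_def N_count_def)

lemma p_hat_distribution:
  assumes "N_count st ac tk s a \<noteq> 0"
  shows "is_distribution (p_hat st ac tk s a)"
proof -
  let ?V = "visits st ac tk s a"
  have "(\<Sum>y\<in>UNIV. card {\<tau> \<in> ?V. st (Suc \<tau>) = y}) = card (\<Union>y. {\<tau> \<in> ?V. st (Suc \<tau>) = y})"
    by (rule card_UN_disjoint[symmetric]) (auto intro: finite_subset[OF _ visits_finite])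
  also have "(\<Union>y. {\<tau> \<in> ?V. st (Suc \<tau>) = y}) = ?V"
    by auto
  finally have "(\<Sum>y\<in>UNIV. real (card {\<tau> \<in> ?V. st (Suc \<tau>) = y})) = real (card ?V)"
    by (simp flip: of_nat_sum)
  then show ?thesis
    using assms by (simp add: is_distribution_def p_hat_def N_count_def flip: sum_divide_distrib)
qed

lemma transition_radius_unvisited_ge_1:
  fixes st :: "nat \<Rightarrow> 's::finite" and ac :: "nat \<Rightarrow> 'a::finite"
  assumes "N_count st ac tk s a = 0" and log: "1 \<le> tk" "0 < \<delta>" "\<delta> < 1"
  shows "1 \<le> transition_radius \<delta> st ac tk s a"
proof -
  have "1 \<le> real CARD('s)"
    by (simp add: Suc_le_eq)
  then have "1 \<le> 8 * real CARD('s)"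
    by linarith
  then have "1 * 1 \<le> 8 * real CARD('s) * confidence_log \<delta> tk TYPE('s) TYPE('a)"
    using confidence_log_ge_1[OF log, where 's = 's and 'a = 'a] by (intro mult_mono) auto
  with assms(1) show ?thesis
    by (simp add: transition_radius_def)
qed

lemma shrink_transition_to_confidence_radius:
  fixes st :: "nat \<Rightarrow> 's::finite" and ac :: "nat \<Rightarrow> 'a::finite"
  assumes Vp: "0 \<le> Vp" and log: "1 \<le> tk" "0 < \<delta>" "\<delta> < 1" and q: "is_distribution q"
    and close: "(\<Sum>y\<in>UNIV. \<bar>q y - p_hat st ac tk s a y\<bar>) \<le> Vp + transition_radius \<delta> st ac tk s a"
  obtains q0 where "is_distribution q0"
    "(\<Sum>y\<in>UNIV. \<bar>q0 y - p_hat st ac tk s a y\<bar>) \<le> transition_radius \<delta> st ac tk s a"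
    "expect q h - Vp * value_span h \<le> expect q0 h"
proof (cases "(\<Sum>y\<in>UNIV. \<bar>q y - p_hat st ac tk s a y\<bar>) \<le> transition_radius \<delta> st ac tk s a")
  case True
  then show ?thesis
    using that[of q] q Vp value_span_nonneg[of h] by simp
next
  case False
  let ?d = "\<Sum>y\<in>UNIV. \<bar>q y - p_hat st ac tk s a y\<bar>"
  have radius: "0 \<le> transition_radius \<delta> st ac tk s a"
    using confidence_log_ge_1[OF log, where 's = 's and 'a = 'a] by (simp add: transition_radius_def)
  have N: "N_count st ac tk s a \<noteq> 0"
  proof
    assume N: "N_count st ac tk s a = 0"
    then have "?d = 1"
      using q by (simp add: p_hat_unvisited is_distribution_def)
    then show False
      using False transition_radius_unvisited_ge_1[OF N log] by simp
  qed
  obtain q0 where "is_distribution q0" "(\<Sum>y\<in>UNIV. \<bar>q0 y - p_hat st ac tk s a y\<bar>) = transition_radius \<delta> st ac tk s a"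
    "expect q h - (?d - transition_radius \<delta> st ac tk s a) * value_span h \<le> expect q0 h"
    by (rule shrink_to_l1_ball[OF q p_hat_distribution[OF N] radius]) (use False in auto)
  moreover have "(?d - transition_radius \<delta> st ac tk s a) * value_span h \<le> Vp * value_span h"
    using close value_span_nonneg by (intro mult_right_mono) auto
  ultimately show ?thesis
    using that by force
qed

lemma confidence_set_approx:
  fixes st :: "nat \<Rightarrow> 's::finite" and ac :: "nat \<Rightarrow> 'a::finite"
  assumes "0 \<le> Vr" "0 \<le> Vp" and log: "1 \<le> tk" "0 < \<delta>" "\<delta> < 1"
    and rewards: "\<And>\<tau>. 0 \<le> rw \<tau> \<and> rw \<tau> \<le> 1"
    and xq: "(x, q) \<in> confidence_set Vr Vp \<delta> st ac rw tk s a"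
  shows "\<exists>(x0, q0) \<in> confidence_set 0 0 \<delta> st ac rw tk s a.
    x + expect q h - Vr - Vp * value_span h \<le> x0 + expect q0 h"
proof -
  have radius: "0 \<le> reward_radius \<delta> st ac tk s a"
    using confidence_log_ge_1[OF log, where 's = 's and 'a = 'a] by (simp add: reward_radius_def)
  have r_hat: "0 \<le> r_hat st ac rw tk s a \<and> r_hat st ac rw tk s a \<le> 1"
    using rewards by (rule r_hat_bounds)
  obtain x0 where x0: "0 \<le> x0" "x0 \<le> 1" "\<bar>x0 - r_hat st ac rw tk s a\<bar> \<le> reward_radius \<delta> st ac tk s a"
    "x - Vr \<le> x0"
    by (rule clip_to_ball[of "r_hat st ac rw tk s a" x "reward_radius \<delta> st ac tk s a" Vr])
      (use r_hat radius xq \<open>0 \<le> Vr\<close> in \<open>auto simp: confidence_set_def\<close>)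
  obtain q0 where q0: "is_distribution q0"
    "(\<Sum>y\<in>UNIV. \<bar>q0 y - p_hat st ac tk s a y\<bar>) \<le> transition_radius \<delta> st ac tk s a"
    "expect q h - Vp * value_span h \<le> expect q0 h"
    by (rule shrink_transition_to_confidence_radius[OF \<open>0 \<le> Vp\<close> log,
          where q = q and st = st and ac = ac and s = s and a = a and h = h])
      (use xq in \<open>auto simp: confidence_set_def\<close>)
  have "(x0, q0) \<in> confidence_set 0 0 \<delta> st ac rw tk s a"
    using x0 q0 by (simp add: confidence_set_def)
  moreover have "x + expect q h - Vr - Vp * value_span h \<le> x0 + expect q0 h"
    using x0(4) q0(3) by linarith
  ultimately show ?thesis
    by blast
qed

section \<open>Variation of the environment\<close>

lemma Max_range_nonneg: "(\<And>z. 0 \<le> F z) \<Longrightarrow> 0 \<le> Max (range (F :: 'b::finite \<Rightarrow> real))"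
  by (rule order_trans[OF _ Max_ge[of _ "F undefined"]]) auto

lemma var_r_nonneg: "0 \<le> var_r rb T"
  unfolding var_r_def by (intro sum_nonneg Max_range_nonneg) (auto split: prod.splits)

lemma var_p_nonneg: "0 \<le> var_p pb T"
  unfolding var_p_def by (intro sum_nonneg Max_range_nonneg) (auto split: prod.splits intro: sum_nonneg)

lemma var_p_single_state:
  fixes pb :: "nat \<Rightarrow> 's::finite \<Rightarrow> 'a::finite \<Rightarrow> 's \<Rightarrow> real"
  assumes mdp: "\<And>t. 1 \<le> t \<Longrightarrow> is_mdp (rb t) (pb t)" and single: "\<And>s s'::'s. s = s'"
  shows "var_p pb T = 0"
proof -
  have univ: "UNIV = {s'}" for s' :: 's
    using single by blast
  have one: "pb t s a s' = 1" if "1 \<le> t" for t s a s'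
  proof -
    have "sum (pb t s a) UNIV = 1"
      using mdp[OF that] by (simp add: is_mdp_def)
    then show ?thesis
      by (simp add: univ[of s'])
  qed
  show ?thesis
    unfolding var_p_def by (rule sum.neutral) (simp add: one)
qed

lemma var_p_eq_0_if_diameter_le_neg:
  fixes pb :: "nat \<Rightarrow> 's::finite \<Rightarrow> 'a::finite \<Rightarrow> 's \<Rightarrow> real"
  assumes mdp: "\<And>t. 1 \<le> t \<Longrightarrow> is_mdp (rb t) (pb t)"
    and diameter: "diameter (pb 1) \<le> ennreal D" and "D < 0"
  shows "var_p pb T = 0"
proof (rule var_p_single_state[OF mdp])
  have "diameter (pb 1) \<le> 0"
    using diameter \<open>D < 0\<close> by (simp add: ennreal_neg)
  then show "s = s'" for s s' :: 's
    using diameter_ge_1[of s s' "pb 1"] by (metis not_one_le_zero order_trans)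
qed

theorem lemma9:
  fixes rb :: "nat \<Rightarrow> 's::finite \<Rightarrow> 'a::finite \<Rightarrow> real"
    and pb :: "nat \<Rightarrow> 's \<Rightarrow> 'a \<Rightarrow> 's \<Rightarrow> real"
    and s1 :: 's and D :: real and T tk :: nat and \<delta> :: real
    and st :: "nat \<Rightarrow> 's" and ac :: "nat \<Rightarrow> 'a" and rw :: "nat \<Rightarrow> real"
  assumes env: "\<And>t. 1 \<le> t \<Longrightarrow> is_mdp (rb t) (pb t) \<and> communicating (pb t) \<and> diameter (pb t) \<le> ennreal D"
    and T: "1 \<le> T"
    and tk: "1 \<le> tk" "tk \<le> T"
    and delta: "0 < \<delta>" "\<delta> < 1"
    and rewards: "\<And>\<tau>. 0 \<le> rw \<tau> \<and> rw \<tau> \<le> 1"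
    and contains: "\<And>\<tau>. 1 \<le> \<tau> \<Longrightarrow> \<tau> \<le> T \<Longrightarrow>
        (rb \<tau>, pb \<tau>) \<in> plausible_set (var_r rb T) (var_p pb T) \<delta> st ac rw tk"
  shows "optimistic_rho (plausible_set (var_r rb T) (var_p pb T) \<delta> st ac rw tk) s1
         \<le> optimistic_rho (plausible_set 0 0 \<delta> st ac rw tk) s1 + var_r rb T + D * var_p pb T"
proof -
  let ?C = "confidence_set (var_r rb T) (var_p pb T) \<delta> st ac rw tk"
  let ?C' = "confidence_set 0 0 \<delta> st ac rw tk"
  have true_mdp: "(rb 1, pb 1) \<in> rectangular_mdps ?C"
    using contains[OF order_refl T] by (simp add: plausible_set_eq_rectangular_mdps)
  note approx = confidence_set_approx[where rw = rw, OF var_r_nonneg var_p_nonneg tk(1) delta rewards]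
  have "(rb 1 s a, pb 1 s a) \<in> ?C s a" for s a
    using true_mdp by (simp add: rectangular_mdps_def)
  then have families: "rectangular_family ?C" "rectangular_family ?C'"
    using approx by (fastforce intro!: rectangular_family_confidence_set)+
  have diameter: "diameter (pb 1) \<le> ennreal (max 0 D)"
    using env[of 1] by (auto intro: order_trans ennreal_leI)
  have "optimistic_rho (rectangular_mdps ?C) s1
      \<le> optimistic_rho (rectangular_mdps ?C') s1 + var_r rb T + max 0 D * var_p pb T"
    by (rule optimistic_rho_rectangular_le[OF families true_mdp diameter max.cobounded1 approx var_p_nonneg])
  moreover have "max 0 D * var_p pb T = D * var_p pb T"
    using var_p_eq_0_if_diameter_le_neg[of rb pb D T] env by (cases "0 \<le> D") auto
  ultimately show ?thesis
    by (simp add: plausible_set_eq_rectangular_mdps)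
qed

end
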